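(* Let $U\subset\mathbb{R}^2$ be bounded, open and contractible, and let $H:\overline{U}\times\mathbb{R}\to\overline{U}\times\mathbb{R}$ be a homeomorphism with $H(U\times\mathbb{R})=U\times\mathbb{R}$. Then the restriction of $H$ to $U\times\mathbb{R}=U^*\times\mathbb{R}$ extends to a homeomorphism $H^*:X^*\times\mathbb{R}\to X^*\times\mathbb{R}$ (with respect to the metric $d$ below) such that $H^*(\partial X^*\times\mathbb{R})=\partial X^*\times\mathbb{R}$, and $H^*$ extends further to a homeomorphism of the two-point compactification $(X^*\times\mathbb{R})\cup\{\infty,-\infty\}$.
   Context: For $x,y\in U$ let $d^*(x,y)$ be the infimum of the Euclidean diameters of paths in $U$ from $x$ to $y$; this is a metric on $U$. Write $U^*=(U,d^* )$, let $(X^*,d^* )$ be its metric completion and $\partial X^*=X^*\setminus U^*$. $X^*\times\mathbb{R}$ carries the metric $d((x,s),(y,t))=\max(d^*(x,y),|s-t|)$. The space $(X^*\times\mathbb{R})\cup\{\infty,-\infty\}$ is obtained by adjoining one point for each end of $\mathbb{R}$: a sequence $(y_n,t_n)$ converges to $\infty$ iff $t_n\to+\infty$, and to $-\infty$ iff $t_n\to-\infty$. *)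

theory Defs
  imports "HOL-Analysis.Analysis"
begin

definition dstar :: "(real^2) set \<Rightarrow> real^2 \<Rightarrow> real^2 \<Rightarrow> real" where
  "dstar U x y = Inf {diameter (path_image g) | g. path g \<and> path_image g \<subseteq> U
                        \<and> pathstart g = x \<and> pathfinish g = y}"

definition is_completion ::
    "(real^2) set \<Rightarrow> 'a set \<Rightarrow> ('a \<Rightarrow> 'a \<Rightarrow> real) \<Rightarrow> (real^2 \<Rightarrow> 'a) \<Rightarrow> bool" where
  "is_completion U X dX emb \<longleftrightarrow>
     Metric_space X dX \<and> Metric_space.mcomplete X dX \<and> emb ` U \<subseteq> X \<and>
     (\<forall>x\<in>U. \<forall>y\<in>U. dX (emb x) (emb y) = dstar U x y) \<and>
     (Metric_space.mtopology X dX) closure_of (emb ` U) = X"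

definition dprod :: "('a \<Rightarrow> 'a \<Rightarrow> real) \<Rightarrow> ('a \<times> real) \<Rightarrow> ('a \<times> real) \<Rightarrow> real" where
  "dprod dX p q = max (dX (fst p) (fst q)) \<bar>snd p - snd q\<bar>"

definition prod_top :: "'a set \<Rightarrow> ('a \<Rightarrow> 'a \<Rightarrow> real) \<Rightarrow> ('a \<times> real) topology" where
  "prod_top X dX = Metric_space.mtopology (X \<times> UNIV) (dprod dX)"

text \<open>Two-point compactification (X* \<times> R) \<union> {\<infinity>, -\<infinity>}: points are Inl p for p in X* \<times> R,
  Inr True = +\<infinity>, Inr False = -\<infinity>.\<close>
definition two_point_top :: "'a set \<Rightarrow> ('a \<Rightarrow> 'a \<Rightarrow> real) \<Rightarrow> (('a \<times> real) + bool) topology" where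
  "two_point_top X dX = topology_generated_by
     ({Inl ` W | W. openin (prod_top X dX) W}
      \<union> {insert (Inr True) (Inl ` (X \<times> {c<..})) | c. True}
      \<union> {insert (Inr False) (Inl ` (X \<times> {..<c})) | c. True})"

end

theory Submission
  imports Defs
begin

text \<open>
  On a compact slab \<open>closure U \<times> [-T, T]\<close> the map \<open>H\<close> is uniformly continuous.  Two points
  of \<open>U\<close> at small \<open>d*\<close>-distance are joined by a path in \<open>U\<close> of small diameter; following it
  while moving linearly in time gives a path of small diameter, whose image under \<open>H\<close> is a
  path in \<open>U \<times> \<real>\<close> of small diameter.  Hence \<open>H\<close> is Cauchy continuous for \<open>d\<close> on \<open>U* \<times> \<real>\<close> and
  extends to \<open>X* \<times> \<real>\<close>; so does \<open>H\<^sup>-\<^sup>1\<close>, the extensions are mutually inverse by density,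
  and since \<open>H\<close> preserves \<open>U \<times> \<real>\<close> the extension preserves \<open>\<partial>X* \<times> \<real>\<close>.

  For the compactification: \<open>H\<close> is proper on \<open>closure U \<times> \<real>\<close>, and \<open>closure U \<times> (c, \<infinity>)\<close> is
  connected, so the \<open>\<real>\<close>-coordinate of \<open>H (x, t)\<close> tends to \<open>+\<infinity>\<close> or to \<open>-\<infinity>\<close> as \<open>t \<rightarrow> \<plusminus>\<infinity>\<close>,
  uniformly in \<open>x\<close> and with opposite limits at the two ends (surjectivity).  Every point
  of \<open>X*\<close> is \<open>d*\<close>-close to points of \<open>U\<close>, so the extension inherits this uniform
  behaviour, which is continuity at \<open>\<plusminus>\<infinity>\<close>.
\<close>

section \<open>The product metric\<close>

lemma dprod_less_iff: "dprod dX p q < e \<longleftrightarrow> dX (fst p) (fst q) < e \<and> \<bar>snd p - snd q\<bar> < e"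
  by (simp add: dprod_def)

lemma Metric_space_dprod:
  assumes "Metric_space X dX"
  shows "Metric_space (X \<times> (UNIV::real set)) (dprod dX)"
proof -
  interpret M: Metric_space X dX by fact
  show ?thesis
  proof
    fix p q assume "p \<in> X \<times> (UNIV::real set)" "q \<in> X \<times> (UNIV::real set)"
    then have "fst p \<in> X" "fst q \<in> X" by auto
    moreover from this have "dprod dX p q = 0 \<longleftrightarrow> dX (fst p) (fst q) = 0 \<and> snd p = snd q"
      using M.nonneg[of "fst p" "fst q"] unfolding dprod_def by linarith
    ultimately show "dprod dX p q = 0 \<longleftrightarrow> p = q"
      using M.zero[of "fst p" "fst q"] by (auto simp: prod_eq_iff)
  next
    fix p q r assume "p \<in> X \<times> (UNIV::real set)" "q \<in> X \<times> (UNIV::real set)" "r \<in> X \<times> (UNIV::real set)"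
    then show "dprod dX p r \<le> dprod dX p q + dprod dX q r"
      using M.triangle[of "fst p" "fst q" "fst r"] M.nonneg[of "fst p" "fst q"] M.nonneg[of "fst q" "fst r"]
      by (auto simp: dprod_def max_def)
  qed (auto simp: dprod_def M.commute abs_minus_commute)
qed

lemma mcomplete_dprod:
  assumes "Metric_space X dX" and "Metric_space.mcomplete X dX"
  shows "Metric_space.mcomplete (X \<times> (UNIV::real set)) (dprod dX)"
proof -
  interpret M: Metric_space X dX by fact
  interpret P: Metric_space "X \<times> (UNIV::real set)" "dprod dX" by (rule Metric_space_dprod) fact
  show ?thesis unfolding P.mcomplete_def
  proof (intro allI impI)
    fix \<sigma> :: "nat \<Rightarrow> 'a \<times> real"
    assume \<sigma>: "P.MCauchy \<sigma>"
    then have "M.MCauchy (fst \<circ> \<sigma>)"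
      unfolding P.MCauchy_def M.MCauchy_def dprod_less_iff image_subset_iff mem_Times_iff
      by (metis comp_apply)
    then obtain a where a: "limitin M.mtopology (fst \<circ> \<sigma>) a sequentially"
      using assms(2) M.mcomplete_def by blast
    have "Cauchy (snd \<circ> \<sigma>)"
      using \<sigma> unfolding Cauchy_def dist_real_def P.MCauchy_def dprod_less_iff by (metis comp_apply)
    then obtain b where b: "(snd \<circ> \<sigma>) \<longlonglongrightarrow> b"
      using Cauchy_convergent_iff convergent_def by blast
    have "limitin P.mtopology \<sigma> (a, b) sequentially"
      unfolding P.limitin_metric dprod_less_iff
    proof (intro conjI allI impI)
      show "(a, b) \<in> X \<times> UNIV" using a M.limitin_mspace by auto
      fix e :: real assume "e > 0"
      then have "\<forall>\<^sub>F n in sequentially. fst (\<sigma> n) \<in> X \<and> dX (fst (\<sigma> n)) a < e"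
        and "\<forall>\<^sub>F n in sequentially. \<bar>snd (\<sigma> n) - b\<bar> < e"
        using a b unfolding M.limitin_metric tendsto_iff dist_real_def by auto
      then show "\<forall>\<^sub>F n in sequentially. \<sigma> n \<in> X \<times> UNIV \<and> dX (fst (\<sigma> n)) (fst (a, b)) < e
          \<and> \<bar>snd (\<sigma> n) - snd (a, b)\<bar> < e"
        by eventually_elim (auto simp: mem_Times_iff)
    qed
    then show "\<exists>x. limitin P.mtopology \<sigma> x sequentially" by blast
  qed
qed

lemma topspace_prod_top:
  assumes "Metric_space X dX"
  shows "topspace (prod_top X dX) = X \<times> UNIV"
proof -
  interpret Metric_space "X \<times> (UNIV::real set)" "dprod dX" by (rule Metric_space_dprod) fact
  show ?thesis unfolding prod_top_def by simp
qed

lemma Hausdorff_space_prod_top: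
  assumes "Metric_space X dX"
  shows "Hausdorff_space (prod_top X dX)"
proof -
  interpret Metric_space "X \<times> (UNIV::real set)" "dprod dX" by (rule Metric_space_dprod) fact
  show ?thesis unfolding prod_top_def by (rule Hausdorff_space_mtopology)
qed

section \<open>The intrinsic diameter metric\<close>

lemma dstar_paths_nonempty:
  assumes "path_connected U" "x \<in> U" "y \<in> U"
  shows "{diameter (path_image g) | g. path g \<and> path_image g \<subseteq> U
            \<and> pathstart g = x \<and> pathfinish g = y} \<noteq> {}"
  using assms unfolding path_connected_def by blast

lemma dstar_paths_bdd_below:
  "bdd_below {diameter (path_image g) | g. path g \<and> path_image g \<subseteq> U
                \<and> pathstart g = x \<and> pathfinish g = y}"
  by (rule bdd_belowI[of _ 0]) (auto intro!: diameter_ge_0 compact_imp_bounded)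

lemma dstar_le_diameter:
  assumes "path g" "path_image g \<subseteq> U" "pathstart g = x" "pathfinish g = y"
  shows "dstar U x y \<le> diameter (path_image g)"
  unfolding dstar_def by (rule cInf_lower[OF _ dstar_paths_bdd_below]) (use assms in blast)

lemma dstar_less_path:
  assumes "path_connected U" "x \<in> U" "y \<in> U" "dstar U x y < e"
  obtains g where "path g" "path_image g \<subseteq> U" "pathstart g = x" "pathfinish g = y"
    "diameter (path_image g) < e"
  using cInf_lessD[OF dstar_paths_nonempty[OF assms(1-3)]] assms(4) unfolding dstar_def by blast

lemma dist_le_dstar:
  assumes "path_connected U" "x \<in> U" "y \<in> U"
  shows "dist x y \<le> dstar U x y"
  unfolding dstar_def
proof (rule cInf_greatest[OF dstar_paths_nonempty[OF assms]], clarify)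
  fix g :: "real \<Rightarrow> real^2" assume "path g"
  then show "dist (pathstart g) (pathfinish g) \<le> diameter (path_image g)"
    by (intro diameter_bounded_bound compact_imp_bounded compact_path_image
        pathstart_in_path_image pathfinish_in_path_image)
qed

lemma dstar_fst_image_le_diameter:
  fixes f :: "(real^2) \<times> real \<Rightarrow> (real^2) \<times> real"
  assumes "path \<gamma>" "path_image \<gamma> \<subseteq> U \<times> UNIV" "continuous_on (path_image \<gamma>) f"
    and "f ` (U \<times> UNIV) \<subseteq> U \<times> UNIV"
  shows "dstar U (fst (f (pathstart \<gamma>))) (fst (f (pathfinish \<gamma>))) \<le> diameter (f ` path_image \<gamma>)"
proof -
  have "path (fst \<circ> f \<circ> \<gamma>)"
    using assms(1,3) unfolding path_def path_image_def
    by (intro continuous_on_compose continuous_intros) auto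
  moreover have "path_image (fst \<circ> f \<circ> \<gamma>) \<subseteq> U"
    using assms(2,4) by (force simp: path_image_compose)
  ultimately have "dstar U (fst (f (pathstart \<gamma>))) (fst (f (pathfinish \<gamma>)))
      \<le> diameter (path_image (fst \<circ> f \<circ> \<gamma>))"
    by (intro dstar_le_diameter) (auto simp: pathstart_def pathfinish_def)
  also have "\<dots> \<le> diameter (f ` path_image \<gamma>)"
  proof (rule diameter_le)
    have "bounded (f ` path_image \<gamma>)"
      using assms(1,3) by (intro compact_imp_bounded compact_continuous_image compact_path_image)
    fix u v assume "u \<in> path_image (fst \<circ> f \<circ> \<gamma>)" "v \<in> path_image (fst \<circ> f \<circ> \<gamma>)"
    then obtain a b where ab: "a \<in> f ` path_image \<gamma>" "b \<in> f ` path_image \<gamma>" "u = fst a" "v = fst b"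
      unfolding path_image_compose image_comp[symmetric] by blast
    then have "dist a b \<le> diameter (f ` path_image \<gamma>)"
      using \<open>bounded (f ` path_image \<gamma>)\<close> by (intro diameter_bounded_bound)
    then show "norm (u - v) \<le> diameter (f ` path_image \<gamma>)"
      using dist_fst_le[of a b] ab(3,4) by (simp add: dist_norm)
  qed (simp add: diameter_ge_0)
  finally show ?thesis .
qed

lemma dist_le_diameter_Times_closed_segment:
  fixes A :: "'a::real_normed_vector set" and s t :: real
  assumes "bounded A" "a \<in> A \<times> closed_segment s t" "b \<in> A \<times> closed_segment s t"
  shows "dist a b \<le> diameter A + \<bar>s - t\<bar>"
proof -
  have "dist (fst a) (fst b) \<le> diameter A"
    using assms by (intro diameter_bounded_bound) auto
  moreover have "dist (snd a) (snd b) \<le> \<bar>s - t\<bar>"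
    using assms(2,3) by (auto simp: closed_segment_eq_real_ivl dist_real_def split: if_splits)
  moreover have "dist a b \<le> dist (fst a) (fst b) + dist (snd a) (snd b)"
    using norm_Pair_le[of "fst a - fst b" "snd a - snd b"] by (cases a; cases b) (simp add: dist_norm)
  ultimately show ?thesis by linarith
qed

definition dstar_prod :: "(real^2) set \<Rightarrow> (real^2) \<times> real \<Rightarrow> (real^2) \<times> real \<Rightarrow> real" where
  "dstar_prod U z z' = max (dstar U (fst z) (fst z')) \<bar>snd z - snd z'\<bar>"

lemma dstar_image_of_lifted_path_le:
  fixes f :: "(real^2) \<times> real \<Rightarrow> (real^2) \<times> real"
  assumes g: "path g" "path_image g \<subseteq> U" "pathstart g = x" "pathfinish g = y"
    and f: "continuous_on (path_image g \<times> closed_segment s t) f" "f ` (U \<times> UNIV) \<subseteq> U \<times> UNIV"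
    and small: "\<And>a b. a \<in> path_image g \<times> closed_segment s t \<Longrightarrow> b \<in> path_image g \<times> closed_segment s t
      \<Longrightarrow> dist (f a) (f b) \<le> e"
  shows "dstar_prod U (f (x, s)) (f (y, t)) \<le> e"
proof -
  define \<gamma> where "\<gamma> \<tau> = (g \<tau>, linepath s t \<tau>)" for \<tau>
  have "path \<gamma>"
    using g(1) unfolding \<gamma>_def path_def by (intro continuous_intros) (auto simp: linepath_def)
  have ends: "pathstart \<gamma> = (x, s)" "pathfinish \<gamma> = (y, t)"
    using g(3,4) by (simp_all add: \<gamma>_def pathstart_def pathfinish_def linepath_def)
  have image: "path_image \<gamma> \<subseteq> path_image g \<times> closed_segment s t"
    unfolding \<gamma>_def using path_image_linepath[of s t] by (auto simp: path_image_def)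
  then have "path_image \<gamma> \<subseteq> U \<times> UNIV" "continuous_on (path_image \<gamma>) f"
    using g(2) continuous_on_subset[OF f(1)] by auto
  then have "dstar U (fst (f (x, s))) (fst (f (y, t))) \<le> diameter (f ` path_image \<gamma>)"
    using dstar_fst_image_le_diameter[OF \<open>path \<gamma>\<close> _ _ f(2)] ends by simp
  also have "\<dots> \<le> e"
  proof (rule diameter_le)
    fix u v assume "u \<in> f ` path_image \<gamma>" "v \<in> f ` path_image \<gamma>"
    then obtain a b where "a \<in> path_image \<gamma>" "b \<in> path_image \<gamma>" "u = f a" "v = f b" by blast
    then show "norm (u - v) \<le> e"
      using small[OF subsetD[OF image] subsetD[OF image]] by (simp add: dist_norm)
  qed (simp add: path_image_nonempty)
  moreover have xs: "(x, s) \<in> path_image \<gamma>" and yt: "(y, t) \<in> path_image \<gamma>"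
    using ends pathstart_in_path_image pathfinish_in_path_image by metis+
  then have "\<bar>snd (f (x, s)) - snd (f (y, t))\<bar> \<le> e"
    using small[OF subsetD[OF image xs] subsetD[OF image yt]] dist_snd_le[of "f (x, s)" "f (y, t)"]
    by (simp add: dist_real_def)
  ultimately show ?thesis by (simp add: dstar_prod_def)
qed

lemma dstar_uniformly_continuous_on_slab:
  fixes f :: "(real^2) \<times> real \<Rightarrow> (real^2) \<times> real"
  assumes "compact K" "U \<subseteq> K" "path_connected U"
    and f: "continuous_on (K \<times> UNIV) f" "f ` (U \<times> UNIV) \<subseteq> U \<times> UNIV"
    and "e > 0"
  obtains \<delta> where "\<delta> > 0"
    "\<And>z z'. z \<in> U \<times> {-T..T} \<Longrightarrow> z' \<in> U \<times> {-T..T} \<Longrightarrow>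
       dstar_prod U z z' < \<delta> \<Longrightarrow> dstar_prod U (f z) (f z') \<le> e"
proof -
  define C where "C = K \<times> {-T..T}"
  have "uniformly_continuous_on C f"
    unfolding C_def using assms(1) f(1)
    by (intro compact_uniformly_continuous compact_Times continuous_on_subset[OF f(1)]) auto
  then obtain d where "d > 0" and d: "\<And>a b. a \<in> C \<Longrightarrow> b \<in> C \<Longrightarrow> dist b a < d \<Longrightarrow> dist (f b) (f a) < e"
    using \<open>e > 0\<close> unfolding uniformly_continuous_on_def by metis
  show ?thesis
  proof (rule that[of "d / 2"])
    fix z z' :: "(real^2) \<times> real"
    assume "z \<in> U \<times> {-T..T}" "z' \<in> U \<times> {-T..T}"
      and "dstar_prod U z z' < d / 2"
    moreover obtain x s y t where z: "z = (x, s)" "z' = (y, t)" by fastforce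
    ultimately have xs: "(x, s) \<in> U \<times> {-T..T}" and yt: "(y, t) \<in> U \<times> {-T..T}"
      and "dstar U x y < d / 2" "\<bar>s - t\<bar> < d / 2" unfolding dstar_prod_def max_less_iff_conj by auto
    then obtain g where g: "path g" "path_image g \<subseteq> U" "pathstart g = x" "pathfinish g = y"
      "diameter (path_image g) < d / 2"
      using dstar_less_path[OF assms(3)] by (metis mem_Times_iff fst_conv)
    have "closed_segment s t \<subseteq> {-T..T}"
      using xs yt by (auto simp: closed_segment_eq_real_ivl split: if_splits)
    with g(2) assms(2) have S: "path_image g \<times> closed_segment s t \<subseteq> C"
      unfolding C_def by blast
    have "bounded (path_image g)"
      using g(1) by (intro compact_imp_bounded compact_path_image)
    then have "dist a b < d"
      if "a \<in> path_image g \<times> closed_segment s t" "b \<in> path_image g \<times> closed_segment s t" for a b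
      using dist_le_diameter_Times_closed_segment[OF _ that] g(5) \<open>\<bar>s - t\<bar> < d / 2\<close> by linarith
    then have "dist (f a) (f b) \<le> e"
      if "a \<in> path_image g \<times> closed_segment s t" "b \<in> path_image g \<times> closed_segment s t" for a b
      using d[of b a] subsetD[OF S that(1)] subsetD[OF S that(2)] that by (simp add: less_imp_le)
    moreover have "continuous_on (path_image g \<times> closed_segment s t) f"
      using S by (intro continuous_on_subset[OF f(1)]) (auto simp: C_def)
    ultimately show "dstar_prod U (f z) (f z') \<le> e"
      unfolding z using dstar_image_of_lifted_path_le[OF g(1-4) _ f(2)] by simp
  qed (use \<open>d > 0\<close> in simp)
qed

section \<open>Extension to the completion\<close>

lemma is_completionD:
  assumes "is_completion U X dX emb"
  shows "Metric_space X dX" "Metric_space.mcomplete X dX" "emb ` U \<subseteq> X"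
    and "\<And>x y. x \<in> U \<Longrightarrow> y \<in> U \<Longrightarrow> dX (emb x) (emb y) = dstar U x y"
    and "Metric_space.mtopology X dX closure_of (emb ` U) = X"
  using assms unfolding is_completion_def by blast+

lemma inj_on_completion_emb:
  assumes "is_completion U X dX emb" "path_connected U"
  shows "inj_on emb U"
proof (rule inj_onI)
  fix x y assume xy: "x \<in> U" "y \<in> U" "emb x = emb y"
  interpret Metric_space X dX using is_completionD(1)[OF assms(1)] .
  have "emb x \<in> X" using xy(1) is_completionD(3)[OF assms(1)] by blast
  then have "dstar U x y = 0"
    using xy is_completionD(4)[OF assms(1)] by force
  then show "x = y" using dist_le_dstar[OF assms(2) xy(1,2)] by simp
qed

lemma dprod_map_prod_emb:
  assumes "is_completion U X dX emb" "fst z \<in> U" "fst z' \<in> U"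
  shows "dprod dX (map_prod emb id z) (map_prod emb id z') = dstar_prod U z z'"
  using is_completionD(4)[OF assms] by (simp add: dprod_def dstar_prod_def map_prod_def split_beta)

lemma prod_top_closure_of_emb:
  assumes "is_completion U X dX emb"
  shows "prod_top X dX closure_of (emb ` U \<times> UNIV) = X \<times> UNIV"
proof -
  note cpl = is_completionD[OF assms]
  interpret M: Metric_space X dX by (fact cpl(1))
  interpret P: Metric_space "X \<times> (UNIV::real set)" "dprod dX" by (rule Metric_space_dprod) fact
  show ?thesis unfolding prod_top_def P.metric_closure_of
  proof (intro set_eqI iffI)
    fix q :: "'a \<times> real" assume q: "q \<in> X \<times> UNIV"
    have "fst q \<in> M.mtopology closure_of (emb ` U)"
      using q cpl(5) by (simp add: mem_Times_iff)
    have "\<exists>y\<in>emb ` U \<times> UNIV. y \<in> P.mball q r" if "r > 0" for r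
    proof -
      obtain y where "y \<in> emb ` U" "y \<in> M.mball (fst q) r"
        using \<open>fst q \<in> M.mtopology closure_of (emb ` U)\<close> \<open>r > 0\<close>
        unfolding M.metric_closure_of by blast
      then have "(y, snd q) \<in> P.mball q r"
        using q by (auto simp: dprod_def mem_Times_iff)
      with \<open>y \<in> emb ` U\<close> show ?thesis by blast
    qed
    then show "q \<in> {x \<in> X \<times> UNIV. \<forall>r>0. \<exists>y\<in>emb ` U \<times> UNIV. y \<in> P.mball x r}"
      using q by blast
  qed blast
qed

lemma dstar_prod_Cauchy_image:
  fixes f :: "(real^2) \<times> real \<Rightarrow> (real^2) \<times> real" and z :: "nat \<Rightarrow> (real^2) \<times> real"
  assumes "compact K" "U \<subseteq> K" "path_connected U"
    and f: "continuous_on (K \<times> UNIV) f" "f ` (U \<times> UNIV) \<subseteq> U \<times> UNIV"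
    and z: "\<And>n. z n \<in> U \<times> UNIV"
    and z_Cauchy: "\<And>e. e > 0 \<Longrightarrow> \<exists>N. \<forall>n n'. N \<le> n \<longrightarrow> N \<le> n' \<longrightarrow> dstar_prod U (z n) (z n') < e"
    and "e > 0"
  shows "\<exists>N. \<forall>n n'. N \<le> n \<longrightarrow> N \<le> n' \<longrightarrow> dstar_prod U (f (z n)) (f (z n')) < e"
proof -
  have "Cauchy (snd \<circ> z)"
    unfolding Cauchy_def dist_real_def using z_Cauchy
    by (metis comp_apply dstar_prod_def max_less_iff_conj)
  then obtain T where T: "\<And>n. \<bar>snd (z n)\<bar> \<le> T"
    using Cauchy_Bseq BseqE by (metis comp_apply real_norm_def)
  have slab: "z n \<in> U \<times> {-T..T}" for n
    using z[of n] T[of n] by (auto simp: mem_Times_iff abs_le_iff)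
  obtain \<delta> where "\<delta> > 0" and \<delta>: "\<And>z z'. z \<in> U \<times> {-T..T} \<Longrightarrow> z' \<in> U \<times> {-T..T} \<Longrightarrow>
      dstar_prod U z z' < \<delta> \<Longrightarrow> dstar_prod U (f z) (f z') \<le> e / 2"
    using dstar_uniformly_continuous_on_slab[OF assms(1-3) f, of "e / 2"] \<open>e > 0\<close> by (metis half_gt_zero)
  obtain N where N: "\<And>n n'. N \<le> n \<Longrightarrow> N \<le> n' \<Longrightarrow> dstar_prod U (z n) (z n') < \<delta>"
    using z_Cauchy[OF \<open>\<delta> > 0\<close>] by blast
  have "dstar_prod U (f (z n)) (f (z n')) < e" if "N \<le> n" "N \<le> n'" for n n'
    using \<delta>[OF slab slab N[OF that]] \<open>e > 0\<close> by simp
  then show ?thesis by blast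
qed

lemma Cauchy_continuous_map_transported:
  fixes f :: "(real^2) \<times> real \<Rightarrow> (real^2) \<times> real"
  assumes "compact K" "U \<subseteq> K" "path_connected U"
    and f: "continuous_on (K \<times> UNIV) f" "f ` (U \<times> UNIV) \<subseteq> U \<times> UNIV"
    and cpl: "is_completion U X dX emb"
  shows "Cauchy_continuous_map (submetric (metric (X \<times> UNIV, dprod dX)) (emb ` U \<times> UNIV))
           (metric (X \<times> UNIV, dprod dX)) (map_prod emb id \<circ> f \<circ> map_prod (inv_into U emb) id)"
  unfolding Cauchy_continuous_map_def
proof (intro allI impI)
  interpret P: Metric_space "X \<times> (UNIV::real set)" "dprod dX"
    by (rule Metric_space_dprod[OF is_completionD(1)[OF cpl]])
  fix \<sigma> :: "nat \<Rightarrow> 'a \<times> real"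
  assume "Metric_space.MCauchy (mspace (submetric (metric (X \<times> UNIV, dprod dX)) (emb ` U \<times> UNIV)))
     (mdist (submetric (metric (X \<times> UNIV, dprod dX)) (emb ` U \<times> UNIV))) \<sigma>"
  then have \<sigma>: "\<And>n. \<sigma> n \<in> emb ` U \<times> UNIV"
    and Cauchy_\<sigma>: "\<And>e. e > 0 \<Longrightarrow> \<exists>N. \<forall>n n'. N \<le> n \<longrightarrow> N \<le> n' \<longrightarrow> dprod dX (\<sigma> n) (\<sigma> n') < e"
    unfolding Metric_space.MCauchy_def[OF Metric_space_mspace_mdist] by auto
  define z where "z n = map_prod (inv_into U emb) id (\<sigma> n)" for n
  have z: "z n \<in> U \<times> UNIV" "\<sigma> n = map_prod emb id (z n)" for n
    using \<sigma>[of n] by (auto simp: z_def map_prod_def split_beta inv_into_into f_inv_into_f)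
  have fz: "f (z n) \<in> U \<times> UNIV" for n
    using z(1) f(2) by blast
  have image_\<sigma>: "(map_prod emb id \<circ> f \<circ> map_prod (inv_into U emb) id \<circ> \<sigma>) n = map_prod emb id (f (z n))" for n
    by (simp add: z_def)
  have "\<exists>N. \<forall>n n'. N \<le> n \<longrightarrow> N \<le> n' \<longrightarrow> dstar_prod U (f (z n)) (f (z n')) < e" if "e > 0" for e
    using Cauchy_\<sigma> z dprod_map_prod_emb[OF cpl]
    by (intro dstar_prod_Cauchy_image[OF assms(1-3) f z(1) _ that]) (simp add: mem_Times_iff)
  then show "Metric_space.MCauchy (mspace (metric (X \<times> UNIV, dprod dX))) (mdist (metric (X \<times> UNIV, dprod dX)))
      (map_prod emb id \<circ> f \<circ> map_prod (inv_into U emb) id \<circ> \<sigma>)"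
    unfolding P.mspace_metric P.mdist_metric P.MCauchy_def image_\<sigma>
    using fz is_completionD(3)[OF cpl] dprod_map_prod_emb[OF cpl]
    by (auto simp: mem_Times_iff map_prod_def split_beta)
qed

lemma continuous_extension_to_completion:
  fixes f :: "(real^2) \<times> real \<Rightarrow> (real^2) \<times> real"
  assumes "compact K" "U \<subseteq> K" "path_connected U"
    and f: "continuous_on (K \<times> UNIV) f" "f ` (U \<times> UNIV) \<subseteq> U \<times> UNIV"
    and cpl: "is_completion U X dX emb"
  obtains F where "continuous_map (prod_top X dX) (prod_top X dX) F"
    "\<And>z. z \<in> U \<times> UNIV \<Longrightarrow> F (map_prod emb id z) = map_prod emb id (f z)"
proof -
  note X = is_completionD[OF cpl]
  interpret P: Metric_space "X \<times> (UNIV::real set)" "dprod dX" by (rule Metric_space_dprod[OF X(1)])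
  have "mcomplete_of (metric (X \<times> (UNIV::real set), dprod dX))"
    using mcomplete_dprod[OF X(1,2)] by simp
  then obtain F where
    F: "continuous_map (subtopology (mtopology_of (metric (X \<times> UNIV, dprod dX)))
        (mtopology_of (metric (X \<times> UNIV, dprod dX)) closure_of (emb ` U \<times> UNIV)))
        (mtopology_of (metric (X \<times> UNIV, dprod dX))) F"
    and F_eq: "\<And>q. q \<in> emb ` U \<times> UNIV \<Longrightarrow> F q = (map_prod emb id \<circ> f \<circ> map_prod (inv_into U emb) id) q"
    using Cauchy_continuous_map_extends_to_continuous_closure_of
      Cauchy_continuous_map_transported[OF assms] by blast
  show ?thesis
  proof
    show "continuous_map (prod_top X dX) (prod_top X dX) F"
      using F prod_top_closure_of_emb[OF cpl] unfolding prod_top_def P.mtopology_of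
      by (metis P.topspace_mtopology subtopology_topspace)
    fix z :: "(real^2) \<times> real" assume "z \<in> U \<times> UNIV"
    then show "F (map_prod emb id z) = map_prod emb id (f z)"
      using F_eq[of "map_prod emb id z"] inv_into_f_f[OF inj_on_completion_emb[OF cpl assms(3)]]
      by (cases z) auto
  qed
qed

lemma extensions_inverse:
  fixes f g :: "(real^2) \<times> real \<Rightarrow> (real^2) \<times> real"
  assumes cpl: "is_completion U X dX emb"
    and F: "continuous_map (prod_top X dX) (prod_top X dX) F"
      "\<And>z. z \<in> U \<times> UNIV \<Longrightarrow> F (map_prod emb id z) = map_prod emb id (f z)"
    and G: "continuous_map (prod_top X dX) (prod_top X dX) G"
      "\<And>z. z \<in> U \<times> UNIV \<Longrightarrow> G (map_prod emb id z) = map_prod emb id (g z)"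
    and g: "g ` (U \<times> UNIV) \<subseteq> U \<times> UNIV" "\<And>z. z \<in> U \<times> UNIV \<Longrightarrow> f (g z) = z"
    and "p \<in> X \<times> UNIV"
  shows "F (G p) = p"
proof -
  have "(F \<circ> G) q = id q" if "q \<in> emb ` U \<times> UNIV" for q
  proof -
    have "q \<in> map_prod emb id ` (U \<times> UNIV)"
      using that by (simp add: map_prod_image)
    then obtain z where z: "q = map_prod emb id z" "z \<in> U \<times> UNIV" by (rule imageE)
    moreover have "g z \<in> U \<times> UNIV" using g(1) imageI[OF z(2)] by (rule subsetD)
    ultimately have "F (G q) = map_prod emb id (f (g z))"
      using F(2) G(2) by simp
    then show ?thesis using z g(2) by simp
  qed
  moreover have "p \<in> prod_top X dX closure_of (emb ` U \<times> UNIV)"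
    using \<open>p \<in> X \<times> UNIV\<close> prod_top_closure_of_emb[OF cpl] by simp
  ultimately have "(F \<circ> G) p = id p"
    using forall_in_closure_of_eq[OF _ Hausdorff_space_prod_top[OF is_completionD(1)[OF cpl]]
        continuous_map_compose[OF G(1) F(1)] continuous_map_id] by blast
  then show ?thesis by simp
qed

lemma homeomorphic_extension_to_completion:
  fixes H H' :: "(real^2) \<times> real \<Rightarrow> (real^2) \<times> real"
  assumes "compact K" "U \<subseteq> K" "path_connected U"
    and hom: "homeomorphism (K \<times> UNIV) (K \<times> UNIV) H H'" and HU: "H ` (U \<times> UNIV) = U \<times> UNIV"
    and cpl: "is_completion U X dX emb"
  obtains F G where "homeomorphic_maps (prod_top X dX) (prod_top X dX) F G"
    "\<And>z. z \<in> U \<times> UNIV \<Longrightarrow> F (map_prod emb id z) = map_prod emb id (H z)"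
    "\<And>z. z \<in> U \<times> UNIV \<Longrightarrow> G (map_prod emb id z) = map_prod emb id (H' z)"
proof -
  have H'H: "H' (H z) = z" and HH': "H (H' z) = z" if "z \<in> U \<times> UNIV" for z
    using hom that assms(2) unfolding homeomorphism_def by auto
  have "H' ` (U \<times> UNIV) = H' ` H ` (U \<times> UNIV)"
    using HU by simp
  also have "\<dots> = U \<times> UNIV"
    unfolding image_image using H'H by simp
  finally have H'U: "H' ` (U \<times> UNIV) = U \<times> UNIV" .
  have "continuous_on (K \<times> UNIV) H" "continuous_on (K \<times> UNIV) H'"
    using hom unfolding homeomorphism_def by simp_all
  then obtain F G where
    F: "continuous_map (prod_top X dX) (prod_top X dX) F"
      "\<And>z. z \<in> U \<times> UNIV \<Longrightarrow> F (map_prod emb id z) = map_prod emb id (H z)"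
    and G: "continuous_map (prod_top X dX) (prod_top X dX) G"
      "\<And>z. z \<in> U \<times> UNIV \<Longrightarrow> G (map_prod emb id z) = map_prod emb id (H' z)"
    using continuous_extension_to_completion[OF assms(1-3) _ _ cpl] HU H'U
    by (metis order_refl)
  have "homeomorphic_maps (prod_top X dX) (prod_top X dX) F G"
    unfolding homeomorphic_maps_def topspace_prod_top[OF is_completionD(1)[OF cpl]]
    using F G extensions_inverse[OF cpl G F] extensions_inverse[OF cpl F G] HU H'U H'H HH'
    by simp
  with F G that show ?thesis by blast
qed

lemma homeomorphic_maps_preserve_boundary:
  fixes H :: "(real^2) \<times> real \<Rightarrow> (real^2) \<times> real"
  assumes hom: "homeomorphic_maps (prod_top X dX) (prod_top X dX) F G"
    and F: "\<And>z. z \<in> U \<times> UNIV \<Longrightarrow> F (map_prod emb id z) = map_prod emb id (H z)"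
    and HU: "H ` (U \<times> UNIV) = U \<times> UNIV"
    and cpl: "is_completion U X dX emb"
  shows "F ` ((X - emb ` U) \<times> UNIV) = (X - emb ` U) \<times> UNIV"
proof -
  note X = is_completionD[OF cpl]
  have "homeomorphic_map (prod_top X dX) (prod_top X dX) F"
    using hom by (rule homeomorphic_maps_imp_map)
  then have inj: "inj_on F (X \<times> UNIV)" and surj: "F ` (X \<times> UNIV) = X \<times> UNIV"
    using homeomorphic_imp_injective_map homeomorphic_imp_surjective_map topspace_prod_top[OF X(1)]
    by metis+
  have "F ` (emb ` U \<times> UNIV) = emb ` U \<times> UNIV"
  proof -
    have "F ` map_prod emb id ` (U \<times> UNIV) = map_prod emb id ` H ` (U \<times> UNIV)"
      unfolding image_image using F by simp
    then show ?thesis unfolding HU by (simp add: map_prod_image)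
  qed
  moreover have "F ` (X \<times> UNIV - emb ` U \<times> UNIV) = F ` (X \<times> UNIV) - F ` (emb ` U \<times> UNIV)"
    using X(3) by (intro inj_on_image_set_diff[OF inj]) auto
  ultimately show ?thesis
    unfolding Times_Diff_distrib1 surj by simp
qed

section \<open>Uniform behaviour at the ends\<close>

text \<open>
  The ends of \<open>\<real>\<close> are encoded by booleans, \<open>True\<close> for \<open>+\<infinity>\<close> and \<open>False\<close> for \<open>-\<infinity>\<close>:
  \<open>beyond e c t\<close> says that \<open>t\<close> lies past \<open>c\<close> towards the end \<open>e\<close> (for \<open>e = False\<close> this
  means \<open>t < -c\<close>).  \<open>maps_ends_uniformly S \<phi> b\<close> says that \<open>\<phi> x t\<close> tends to the end \<open>e = b\<close>
  as \<open>t\<close> tends to the end \<open>e\<close>, uniformly in \<open>x \<in> S\<close>; thus \<open>b\<close> tells whether the ends are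
  preserved or swapped.
\<close>

definition beyond :: "bool \<Rightarrow> real \<Rightarrow> real \<Rightarrow> bool" where
  "beyond e c t \<longleftrightarrow> c < (if e then t else - t)"

definition maps_ends_uniformly :: "'x set \<Rightarrow> ('x \<Rightarrow> real \<Rightarrow> real) \<Rightarrow> bool \<Rightarrow> bool" where
  "maps_ends_uniformly S \<phi> b \<longleftrightarrow>
     (\<forall>e c. \<exists>c'. \<forall>x\<in>S. \<forall>t. beyond e c' t \<longrightarrow> beyond (e = b) c (\<phi> x t))"

lemma beyond_abs: "beyond e c t \<Longrightarrow> c < \<bar>t\<bar>"
  by (auto simp: beyond_def split: if_splits)

lemma beyond_mono: "beyond e c t \<Longrightarrow> c' \<le> c \<Longrightarrow> beyond e c' t"
  by (auto simp: beyond_def split: if_splits)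

lemma connected_beyond: "connected (Collect (beyond e c))"
proof (cases e)
  case True
  then have "Collect (beyond e c) = {c<..}" by (auto simp: beyond_def)
  then show ?thesis by simp
next
  case False
  then have "Collect (beyond e c) = {..<-c}" by (auto simp: beyond_def)
  then show ?thesis by simp
qed

lemma abs_snd_bound_of_left_inverse:
  fixes f g :: "'a::real_normed_vector \<times> real \<Rightarrow> 'a \<times> real"
  assumes "compact K" "continuous_on (K \<times> UNIV) g"
    and fK: "f ` (K \<times> UNIV) \<subseteq> K \<times> UNIV" and gf: "\<And>z. z \<in> K \<times> UNIV \<Longrightarrow> g (f z) = z"
  obtains B where "\<And>x t. x \<in> K \<Longrightarrow> B < \<bar>t\<bar> \<Longrightarrow> M < \<bar>snd (f (x, t))\<bar>"
proof -
  have "compact (g ` (K \<times> {-M..M}))"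
    using assms(1) by (intro compact_continuous_image continuous_on_subset[OF assms(2)] compact_Times) auto
  then obtain B where B: "\<And>z. z \<in> K \<times> {-M..M} \<Longrightarrow> norm (g z) \<le> B"
    using compact_imp_bounded bounded_iff by (metis image_eqI)
  show ?thesis
  proof (rule that[of B], rule ccontr)
    fix x t assume "x \<in> K" "B < \<bar>t\<bar>" "\<not> M < \<bar>snd (f (x, t))\<bar>"
    moreover from \<open>x \<in> K\<close> have "f (x, t) \<in> K \<times> UNIV"
      using fK by (auto simp: image_subset_iff)
    ultimately have "f (x, t) \<in> K \<times> {-M..M}" by (auto simp: mem_Times_iff)
    then have "norm (g (f (x, t))) \<le> B" by (rule B)
    then have "norm (x, t) \<le> B" using gf \<open>x \<in> K\<close> by simp
    with \<open>B < \<bar>t\<bar>\<close> show False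
      using norm_snd_le[of t x] by simp
  qed
qed

lemma connected_nonvanishing_imp_beyond:
  fixes \<phi> :: "'a::topological_space \<Rightarrow> real"
  assumes "connected A" "continuous_on A \<phi>" "\<And>z. z \<in> A \<Longrightarrow> \<phi> z \<noteq> 0"
  obtains s where "\<And>z. z \<in> A \<Longrightarrow> beyond s 0 (\<phi> z)"
proof -
  have "(\<forall>z\<in>A. 0 < \<phi> z) \<or> (\<forall>z\<in>A. \<phi> z < 0)"
  proof (rule ccontr)
    assume "\<not> ?thesis"
    then obtain z1 z2 where z: "z1 \<in> A" "z2 \<in> A" "\<phi> z1 < 0" "0 < \<phi> z2"
      using assms(3) by (meson linorder_neqE_linordered_idom not_less)
    have "connected (\<phi> ` A)" using assms(2,1) by (rule connected_continuous_image)
    then have "{\<phi> z1..\<phi> z2} \<subseteq> \<phi> ` A" using z by (intro connected_contains_Icc) auto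
    then have "0 \<in> \<phi> ` A" using z by auto
    then show False using assms(3) by auto
  qed
  then show ?thesis
    using that[of True] that[of False] by (auto simp: beyond_def)
qed

lemma uniform_end_behaviour:
  fixes \<phi> :: "'a::topological_space \<times> real \<Rightarrow> real"
  assumes "connected K" "continuous_on (K \<times> UNIV) \<phi>"
    and bound: "\<And>M. \<exists>B. \<forall>x\<in>K. \<forall>t. B < \<bar>t\<bar> \<longrightarrow> M < \<bar>\<phi> (x, t)\<bar>"
  obtains s where "\<And>c. \<exists>c'. \<forall>x\<in>K. \<forall>t. beyond e c' t \<longrightarrow> beyond s c (\<phi> (x, t))"
proof -
  obtain B0 where B0: "\<And>x t. x \<in> K \<Longrightarrow> B0 < \<bar>t\<bar> \<Longrightarrow> 0 < \<bar>\<phi> (x, t)\<bar>"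
    using bound[of 0] by blast
  have "connected (K \<times> Collect (beyond e B0))"
    using assms(1) connected_beyond by (rule connected_Times)
  moreover have "continuous_on (K \<times> Collect (beyond e B0)) \<phi>"
    using assms(2) by (rule continuous_on_subset) auto
  moreover have "\<phi> z \<noteq> 0" if "z \<in> K \<times> Collect (beyond e B0)" for z
    using that B0 beyond_abs by (cases z) fastforce
  ultimately obtain s where s: "\<And>z. z \<in> K \<times> Collect (beyond e B0) \<Longrightarrow> beyond s 0 (\<phi> z)"
    using connected_nonvanishing_imp_beyond by metis
  show ?thesis
  proof (rule that[of s])
    fix c
    obtain B1 where B1: "\<And>x t. x \<in> K \<Longrightarrow> B1 < \<bar>t\<bar> \<Longrightarrow> \<bar>c\<bar> < \<bar>\<phi> (x, t)\<bar>"
      using bound[of "\<bar>c\<bar>"] by blast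
    have "beyond s c (\<phi> (x, t))" if "x \<in> K" "beyond e (max B0 B1) t" for x t
    proof -
      have "beyond s 0 (\<phi> (x, t))"
        using s that beyond_mono[OF that(2)] by simp
      moreover have "\<bar>c\<bar> < \<bar>\<phi> (x, t)\<bar>"
        using B1 that beyond_abs[OF beyond_mono[OF that(2)]] by simp
      ultimately show ?thesis by (auto simp: beyond_def split: if_splits)
    qed
    then show "\<exists>c'. \<forall>x\<in>K. \<forall>t. beyond e c' t \<longrightarrow> beyond s c (\<phi> (x, t))" by blast
  qed
qed

lemma end_signs_differ:
  fixes \<phi> :: "'a::topological_space \<times> real \<Rightarrow> real"
  assumes "compact K" "continuous_on (K \<times> UNIV) \<phi>" and surj: "\<And>v. \<exists>z\<in>K \<times> UNIV. \<phi> z = v"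
    and top: "\<And>c. \<exists>c'. \<forall>x\<in>K. \<forall>t. beyond True c' t \<longrightarrow> beyond s c (\<phi> (x, t))"
    and bot: "\<And>c. \<exists>c'. \<forall>x\<in>K. \<forall>t. beyond False c' t \<longrightarrow> beyond s c (\<phi> (x, t))"
  shows False
proof -
  obtain c1 c2 where
    c1: "\<And>x t. x \<in> K \<Longrightarrow> beyond True c1 t \<Longrightarrow> beyond s 0 (\<phi> (x, t))" and
    c2: "\<And>x t. x \<in> K \<Longrightarrow> beyond False c2 t \<Longrightarrow> beyond s 0 (\<phi> (x, t))"
    using top[of 0] bot[of 0] by blast
  define R where "R = max \<bar>c1\<bar> \<bar>c2\<bar>"
  have "compact (\<phi> ` (K \<times> {-R..R}))"
    using assms(1) by (intro compact_continuous_image continuous_on_subset[OF assms(2)] compact_Times) auto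
  then obtain L where L: "\<And>z. z \<in> K \<times> {-R..R} \<Longrightarrow> \<bar>\<phi> z\<bar> \<le> L"
    using compact_imp_bounded bounded_iff by (metis image_eqI real_norm_def)
  text \<open>A value of the sign opposite to \<open>s\<close> and too large for the compact middle part.\<close>
  obtain x t where "x \<in> K" and v: "\<phi> (x, t) = (if s then - \<bar>L\<bar> - 1 else \<bar>L\<bar> + 1)"
    using surj by blast
  then have "\<not> beyond s 0 (\<phi> (x, t))" by (simp add: beyond_def)
  then have "\<not> beyond True c1 t" "\<not> beyond False c2 t"
    using c1 c2 \<open>x \<in> K\<close> by blast+
  then have "(x, t) \<in> K \<times> {-R..R}"
    using \<open>x \<in> K\<close> by (auto simp: beyond_def R_def)
  then show False using L v by (smt (verit))
qed

lemma maps_ends_uniformly_of_homeomorphism_nonempty: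
  fixes f g :: "'a::real_normed_vector \<times> real \<Rightarrow> 'a \<times> real"
  assumes "compact K" "connected K" "K \<noteq> {}" and hom: "homeomorphism (K \<times> UNIV) (K \<times> UNIV) f g"
  obtains b where "maps_ends_uniformly K (\<lambda>x t. snd (f (x, t))) b"
proof -
  have f: "continuous_on (K \<times> UNIV) f" "f ` (K \<times> UNIV) = K \<times> UNIV"
    and g: "continuous_on (K \<times> UNIV) g" "g ` (K \<times> UNIV) = K \<times> UNIV"
    and gf: "\<And>z. z \<in> K \<times> UNIV \<Longrightarrow> g (f z) = z" and fg: "\<And>z. z \<in> K \<times> UNIV \<Longrightarrow> f (g z) = z"
    using hom unfolding homeomorphism_def by auto
  define \<phi> where "\<phi> = snd \<circ> f"
  have "continuous_on (K \<times> UNIV) \<phi>"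
    unfolding \<phi>_def using f(1) by (intro continuous_intros)
  moreover have "\<exists>B. \<forall>x\<in>K. \<forall>t. B < \<bar>t\<bar> \<longrightarrow> M < \<bar>\<phi> (x, t)\<bar>" for M
  proof -
    obtain B where "\<And>x t. x \<in> K \<Longrightarrow> B < \<bar>t\<bar> \<Longrightarrow> M < \<bar>snd (f (x, t))\<bar>"
      using abs_snd_bound_of_left_inverse[OF assms(1) g(1) _ gf] f(2) by blast
    then show ?thesis unfolding \<phi>_def by auto
  qed
  ultimately obtain sT sF where
    sT: "\<And>c. \<exists>c'. \<forall>x\<in>K. \<forall>t. beyond True c' t \<longrightarrow> beyond sT c (\<phi> (x, t))" and
    sF: "\<And>c. \<exists>c'. \<forall>x\<in>K. \<forall>t. beyond False c' t \<longrightarrow> beyond sF c (\<phi> (x, t))"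
    using uniform_end_behaviour[OF assms(2)] by metis
  have "sF = (\<not> sT)"
  proof (rule ccontr)
    obtain x0 where "x0 \<in> K" using assms(3) by blast
    then have "\<exists>z\<in>K \<times> UNIV. \<phi> z = v" for v
      using fg[of "(x0, v)"] g(2) unfolding \<phi>_def by (metis SigmaI UNIV_I comp_apply imageI snd_conv)
    moreover assume "sF \<noteq> (\<not> sT)"
    ultimately show False
      using end_signs_differ[OF assms(1) \<open>continuous_on (K \<times> UNIV) \<phi>\<close>, of sT] sT sF by auto
  qed
  then have "maps_ends_uniformly K (\<lambda>x t. snd (f (x, t))) sT"
    unfolding maps_ends_uniformly_def using sT sF by (simp add: \<phi>_def) (metis (full_types))
  then show ?thesis by (rule that)
qed

lemma maps_ends_uniformly_left_inverse:
  fixes f g :: "'a \<times> real \<Rightarrow> 'a \<times> real"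
  assumes "x0 \<in> K" "f ` (K \<times> UNIV) \<subseteq> K \<times> UNIV" "\<And>z. z \<in> K \<times> UNIV \<Longrightarrow> g (f z) = z"
    and f: "maps_ends_uniformly K (\<lambda>x t. snd (f (x, t))) b"
    and g: "maps_ends_uniformly K (\<lambda>x t. snd (g (x, t))) b'"
  shows "b = b'"
proof -
  obtain c1 where c1: "\<And>x t. x \<in> K \<Longrightarrow> beyond b c1 t \<Longrightarrow> beyond (b = b') 0 (snd (g (x, t)))"
    using g unfolding maps_ends_uniformly_def by blast
  obtain c2 where c2: "\<And>x t. x \<in> K \<Longrightarrow> beyond True c2 t \<Longrightarrow> beyond b c1 (snd (f (x, t)))"
    using f unfolding maps_ends_uniformly_def by (metis (full_types))
  define t where "t = max c2 0 + 1"
  have "f (x0, t) \<in> K \<times> UNIV" using assms(1,2) by blast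
  moreover have "beyond b c1 (snd (f (x0, t)))"
    using c2 assms(1) by (simp add: beyond_def t_def)
  ultimately have "beyond (b = b') 0 (snd (g (f (x0, t))))"
    using c1 by (metis mem_Times_iff prod.collapse)
  then show "b = b'"
    using assms(1,3) by (auto simp: beyond_def t_def split: if_splits)
qed

lemma maps_ends_uniformly_of_homeomorphism:
  fixes f g :: "'a::real_normed_vector \<times> real \<Rightarrow> 'a \<times> real"
  assumes "compact K" "connected K" and hom: "homeomorphism (K \<times> UNIV) (K \<times> UNIV) f g"
  obtains b where "maps_ends_uniformly K (\<lambda>x t. snd (f (x, t))) b"
    "maps_ends_uniformly K (\<lambda>x t. snd (g (x, t))) b"
proof (cases "K = {}")
  case True
  then show ?thesis using that by (simp add: maps_ends_uniformly_def)
next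
  case False
  then obtain x0 where "x0 \<in> K" by blast
  obtain b b' where "maps_ends_uniformly K (\<lambda>x t. snd (f (x, t))) b"
    "maps_ends_uniformly K (\<lambda>x t. snd (g (x, t))) b'"
    using maps_ends_uniformly_of_homeomorphism_nonempty[OF assms(1,2) False]
      hom homeomorphism_sym by metis
  moreover from this have "b = b'"
    using hom \<open>x0 \<in> K\<close> by (intro maps_ends_uniformly_left_inverse) (auto simp: homeomorphism_def)
  ultimately show ?thesis using that by blast
qed

lemma maps_ends_uniformly_approx:
  assumes "maps_ends_uniformly K \<phi> b" and "\<And>p t. p \<in> P \<Longrightarrow> \<exists>x\<in>K. \<bar>\<psi> p t - \<phi> x t\<bar> < 1"
  shows "maps_ends_uniformly P \<psi> b"
  unfolding maps_ends_uniformly_def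
proof (intro allI)
  fix e c
  obtain c' where c': "\<And>x t. x \<in> K \<Longrightarrow> beyond e c' t \<Longrightarrow> beyond (e = b) (c + 1) (\<phi> x t)"
    using assms(1) unfolding maps_ends_uniformly_def by blast
  have "beyond (e = b) c (\<psi> p t)" if "p \<in> P" "beyond e c' t" for p t
  proof -
    obtain x where "x \<in> K" "\<bar>\<psi> p t - \<phi> x t\<bar> < 1" using assms(2) \<open>p \<in> P\<close> by blast
    moreover from this have "beyond (e = b) (c + 1) (\<phi> x t)" using c' \<open>beyond e c' t\<close> by blast
    ultimately show ?thesis by (auto simp: beyond_def split: if_splits)
  qed
  then show "\<exists>c'. \<forall>p\<in>P. \<forall>t. beyond e c' t \<longrightarrow> beyond (e = b) c (\<psi> p t)" by blast
qed

lemma extension_snd_approx: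
  fixes H :: "(real^2) \<times> real \<Rightarrow> (real^2) \<times> real"
  assumes cpl: "is_completion U X dX emb"
    and F: "continuous_map (prod_top X dX) (prod_top X dX) F"
      "\<And>z. z \<in> U \<times> UNIV \<Longrightarrow> F (map_prod emb id z) = map_prod emb id (H z)"
    and "p \<in> X"
  shows "\<exists>x\<in>U. \<bar>snd (F (p, t)) - snd (H (x, t))\<bar> < 1"
proof -
  note X = is_completionD[OF cpl]
  interpret M: Metric_space X dX by (fact X(1))
  interpret P: Metric_space "X \<times> (UNIV::real set)" "dprod dX" by (rule Metric_space_dprod[OF X(1)])
  obtain \<delta> where "\<delta> > 0"
    and \<delta>: "\<And>q. q \<in> X \<times> UNIV \<Longrightarrow> dprod dX (p, t) q < \<delta> \<Longrightarrow> dprod dX (F (p, t)) (F q) < 1"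
    using F(1) \<open>p \<in> X\<close> unfolding prod_top_def P.metric_continuous_map[OF P.Metric_space_axioms]
    by (metis mem_Times_iff UNIV_I fst_conv snd_conv zero_less_one)
  have "p \<in> M.mtopology closure_of (emb ` U)" using \<open>p \<in> X\<close> X(5) by simp
  then obtain x where "x \<in> U" "dX p (emb x) < \<delta>"
    using \<open>\<delta> > 0\<close> unfolding M.metric_closure_of by (auto simp: M.in_mball)
  moreover have "emb x \<in> X" using \<open>x \<in> U\<close> X(3) by blast
  ultimately have "dprod dX (F (p, t)) (F (emb x, t)) < 1"
    using \<delta>[of "(emb x, t)"] M.nonneg[of p "emb x"] by (simp add: dprod_def)
  moreover have "F (emb x, t) = map_prod emb id (H (x, t))"
    using F(2)[of "(x, t)"] \<open>x \<in> U\<close> by simp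
  ultimately show ?thesis using \<open>x \<in> U\<close> by (auto simp: dprod_def map_prod_def split_beta)
qed

lemma maps_ends_uniformly_extension:
  fixes H :: "(real^2) \<times> real \<Rightarrow> (real^2) \<times> real"
  assumes cpl: "is_completion U X dX emb" and "U \<subseteq> K"
    and F: "continuous_map (prod_top X dX) (prod_top X dX) F"
      "\<And>z. z \<in> U \<times> UNIV \<Longrightarrow> F (map_prod emb id z) = map_prod emb id (H z)"
    and "maps_ends_uniformly K (\<lambda>x t. snd (H (x, t))) b"
  shows "maps_ends_uniformly X (\<lambda>p t. snd (F (p, t))) b"
  using extension_snd_approx[OF cpl F] \<open>U \<subseteq> K\<close>
  by (intro maps_ends_uniformly_approx[OF assms(5)]) blast

section \<open>The two-point compactification\<close>

definition end_nbhd :: "'a set \<Rightarrow> bool \<Rightarrow> real \<Rightarrow> ('a \<times> real + bool) set" where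
  "end_nbhd X e c = insert (Inr e) (Inl ` (X \<times> Collect (beyond e c)))"

lemma end_nbhd_True: "end_nbhd X True c = insert (Inr True) (Inl ` (X \<times> {c<..}))"
  unfolding end_nbhd_def beyond_def by auto

lemma end_nbhd_False: "end_nbhd X False c = insert (Inr False) (Inl ` (X \<times> {..<- c}))"
  unfolding end_nbhd_def beyond_def by auto

lemma two_point_top_basis_cases:
  assumes "V \<in> {Inl ` W | W. openin (prod_top X dX) W}
      \<union> {insert (Inr True) (Inl ` (X \<times> {c<..})) | c. True}
      \<union> {insert (Inr False) (Inl ` (X \<times> {..<c})) | c. True}"
  obtains W where "V = Inl ` W" "openin (prod_top X dX) W" | e c where "V = end_nbhd X e c"
proof -
  consider W where "V = Inl ` W" "openin (prod_top X dX) W"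
    | c where "V = insert (Inr True) (Inl ` (X \<times> {c<..}))"
    | c where "V = insert (Inr False) (Inl ` (X \<times> {..<c}))"
    using assms unfolding Un_iff mem_Collect_eq by (elim disjE exE conjE) auto
  then show ?thesis
  proof cases
    case 1
    then show ?thesis using that(1) by blast
  next
    case (2 c)
    then show ?thesis using that(2)[of True c] by (simp add: end_nbhd_True)
  next
    case (3 c)
    then show ?thesis using that(2)[of False "- c"] by (simp add: end_nbhd_False)
  qed
qed

lemma openin_two_point_top_Inl:
  assumes "openin (prod_top X dX) W"
  shows "openin (two_point_top X dX) (Inl ` W)"
  unfolding two_point_top_def using assms by (intro topology_generated_by_Basis UnI1) auto

lemma openin_two_point_top_end_nbhd: "openin (two_point_top X dX) (end_nbhd X e c)"
proof (cases e)
  case True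
  have "end_nbhd X e c \<in> {insert (Inr True) (Inl ` (X \<times> {c<..})) | c. True}"
    using True by (auto simp: end_nbhd_True)
  then show ?thesis unfolding two_point_top_def by (simp add: topology_generated_by_Basis)
next
  case False
  have "end_nbhd X e c \<in> {insert (Inr False) (Inl ` (X \<times> {..<c})) | c. True}"
    using False by (auto simp: end_nbhd_False)
  then show ?thesis unfolding two_point_top_def by (simp add: topology_generated_by_Basis)
qed

lemma topspace_two_point_top:
  assumes "Metric_space X dX"
  shows "topspace (two_point_top X dX) = Inl ` (X \<times> UNIV) \<union> range Inr"
proof (rule equalityI)
  show "topspace (two_point_top X dX) \<subseteq> Inl ` (X \<times> UNIV) \<union> range Inr"
    unfolding two_point_top_def topology_generated_by_topspace
  proof (rule Union_least)
    fix V assume "V \<in> {Inl ` W | W. openin (prod_top X dX) W}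
      \<union> {insert (Inr True) (Inl ` (X \<times> {c<..})) | c. True}
      \<union> {insert (Inr False) (Inl ` (X \<times> {..<c})) | c. True}"
    then show "V \<subseteq> Inl ` (X \<times> UNIV) \<union> range Inr"
    proof (cases rule: two_point_top_basis_cases)
      case (1 W)
      then show ?thesis using openin_subset[OF 1(2)] topspace_prod_top[OF assms] by auto
    next
      case (2 e c)
      then show ?thesis by (auto simp: end_nbhd_def)
    qed
  qed
  have "openin (prod_top X dX) (X \<times> UNIV)"
    using openin_topspace[of "prod_top X dX"] unfolding topspace_prod_top[OF assms] .
  then have "Inl ` (X \<times> UNIV) \<subseteq> topspace (two_point_top X dX)"
    by (intro openin_subset openin_two_point_top_Inl)
  moreover have "Inr e \<in> topspace (two_point_top X dX)" for e
    using openin_subset[OF openin_two_point_top_end_nbhd[of X dX e 0]] by (auto simp: end_nbhd_def)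
  ultimately show "Inl ` (X \<times> UNIV) \<union> range Inr \<subseteq> topspace (two_point_top X dX)"
    by blast
qed

lemma openin_prod_top_beyond:
  assumes "Metric_space X dX"
  shows "openin (prod_top X dX) (X \<times> Collect (beyond e c))"
proof -
  interpret P: Metric_space "X \<times> (UNIV::real set)" "dprod dX" by (rule Metric_space_dprod) fact
  have "\<exists>r>0. P.mball q r \<subseteq> X \<times> Collect (beyond e c)" if "q \<in> X \<times> Collect (beyond e c)" for q
  proof -
    have "0 < (if e then snd q else - snd q) - c"
      using that by (auto simp: beyond_def mem_Times_iff)
    moreover have "P.mball q ((if e then snd q else - snd q) - c) \<subseteq> X \<times> Collect (beyond e c)"
      by (auto simp: P.in_mball dprod_def beyond_def mem_Times_iff)
    ultimately show ?thesis by blast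
  qed
  then show ?thesis
    unfolding prod_top_def P.openin_mtopology by auto
qed

lemma openin_prod_top_preimage:
  assumes "Metric_space X dX" "continuous_map (prod_top X dX) (prod_top X dX) F"
    and "openin (prod_top X dX) W"
  shows "openin (prod_top X dX) {q \<in> X \<times> UNIV. F q \<in> W}"
  using openin_continuous_map_preimage[OF assms(2,3)] unfolding topspace_prod_top[OF assms(1)] .

lemma openin_two_point_top_preimage_Inl:
  assumes MX: "Metric_space X dX" and F: "continuous_map (prod_top X dX) (prod_top X dX) F"
    and "openin (prod_top X dX) W"
  shows "openin (two_point_top X dX) (map_sum F h -` Inl ` W \<inter> topspace (two_point_top X dX))"
proof -
  have "map_sum F h -` Inl ` W \<inter> topspace (two_point_top X dX) = Inl ` {q \<in> X \<times> UNIV. F q \<in> W}"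
  proof (rule set_eqI)
    fix z show "z \<in> map_sum F h -` Inl ` W \<inter> topspace (two_point_top X dX)
        \<longleftrightarrow> z \<in> Inl ` {q \<in> X \<times> UNIV. F q \<in> W}"
      unfolding topspace_two_point_top[OF MX] by (cases z) auto
  qed
  then show ?thesis
    using openin_two_point_top_Inl[OF openin_prod_top_preimage[OF assms]] by simp
qed

lemma openin_two_point_top_preimage_end_nbhd:
  assumes MX: "Metric_space X dX" and F: "continuous_map (prod_top X dX) (prod_top X dX) F"
    and ends: "maps_ends_uniformly X (\<lambda>p t. snd (F (p, t))) b"
  shows "openin (two_point_top X dX)
           (map_sum F (\<lambda>e. e = b) -` end_nbhd X e c \<inter> topspace (two_point_top X dX))"
proof -
  have FX: "F q \<in> X \<times> UNIV" if "q \<in> X \<times> UNIV" for q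
    using continuous_map_image_subset_topspace[OF F] that unfolding topspace_prod_top[OF MX] by blast
  text \<open>The end \<open>e\<close> of the target is the image of the end \<open>e = b\<close> of the source.\<close>
  obtain c' where "\<forall>p\<in>X. \<forall>t. beyond (e = b) c' t \<longrightarrow> beyond ((e = b) = b) c (snd (F (p, t)))"
    using ends unfolding maps_ends_uniformly_def by blast
  then have c': "\<And>p t. p \<in> X \<Longrightarrow> beyond (e = b) c' t \<Longrightarrow> beyond e c (snd (F (p, t)))"
    by (cases b) simp_all
  have "map_sum F (\<lambda>e. e = b) -` end_nbhd X e c \<inter> topspace (two_point_top X dX)
      = end_nbhd X (e = b) c' \<union> Inl ` {q \<in> X \<times> UNIV. F q \<in> X \<times> Collect (beyond e c)}"
  proof (rule set_eqI)
    fix z show "z \<in> map_sum F (\<lambda>e. e = b) -` end_nbhd X e c \<inter> topspace (two_point_top X dX) \<longleftrightarrow>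
        z \<in> end_nbhd X (e = b) c' \<union> Inl ` {q \<in> X \<times> UNIV. F q \<in> X \<times> Collect (beyond e c)}"
    proof (cases z)
      case (Inl q)
      have "F q \<in> X \<times> Collect (beyond e c)" if "q \<in> X \<times> Collect (beyond (e = b) c')"
        using that c'[of "fst q" "snd q"] FX[of q] by (auto simp: mem_Times_iff)
      then show ?thesis unfolding Inl topspace_two_point_top[OF MX] end_nbhd_def by auto
    next
      case (Inr e')
      then show ?thesis unfolding topspace_two_point_top[OF MX] end_nbhd_def by auto
    qed
  qed
  then show ?thesis
    by (simp only:) (intro openin_Un openin_two_point_top_end_nbhd openin_two_point_top_Inl
        openin_prod_top_preimage openin_prod_top_beyond MX F)
qed

lemma continuous_map_two_point_top:
  assumes MX: "Metric_space X dX"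
    and F: "continuous_map (prod_top X dX) (prod_top X dX) F"
    and ends: "maps_ends_uniformly X (\<lambda>p t. snd (F (p, t))) b"
  shows "continuous_map (two_point_top X dX) (two_point_top X dX) (map_sum F (\<lambda>e. e = b))"
proof -
  let ?B = "{Inl ` W | W. openin (prod_top X dX) W}
      \<union> {insert (Inr True) (Inl ` (X \<times> {c<..})) | c. True}
      \<union> {insert (Inr False) (Inl ` (X \<times> {..<c})) | c. True}"
  have "continuous_map (two_point_top X dX) (topology_generated_by ?B) (map_sum F (\<lambda>e. e = b))"
  proof (rule continuous_on_generated_topo)
    have "F ` (X \<times> UNIV) \<subseteq> X \<times> UNIV"
      using continuous_map_image_subset_topspace[OF F] unfolding topspace_prod_top[OF MX] .
    then have "map_sum F (\<lambda>e. e = b) ` topspace (two_point_top X dX) \<subseteq> topspace (two_point_top X dX)"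
      unfolding topspace_two_point_top[OF MX] image_Un image_image by auto
    then show "map_sum F (\<lambda>e. e = b) ` topspace (two_point_top X dX) \<subseteq> \<Union> ?B"
      unfolding two_point_top_def topology_generated_by_topspace .
  next
    fix V assume "V \<in> ?B"
    then show "openin (two_point_top X dX) (map_sum F (\<lambda>e. e = b) -` V \<inter> topspace (two_point_top X dX))"
      by (cases rule: two_point_top_basis_cases)
        (simp_all add: openin_two_point_top_preimage_Inl[OF MX F]
          openin_two_point_top_preimage_end_nbhd[OF MX F ends])
  qed
  then show ?thesis unfolding two_point_top_def .
qed

lemma homeomorphic_maps_two_point_top:
  assumes MX: "Metric_space X dX"
    and hom: "homeomorphic_maps (prod_top X dX) (prod_top X dX) F G"
    and "maps_ends_uniformly X (\<lambda>p t. snd (F (p, t))) b" "maps_ends_uniformly X (\<lambda>p t. snd (G (p, t))) b"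
  shows "homeomorphic_maps (two_point_top X dX) (two_point_top X dX)
           (map_sum F (\<lambda>e. e = b)) (map_sum G (\<lambda>e. e = b))"
proof -
  have F: "continuous_map (prod_top X dX) (prod_top X dX) F"
    and G: "continuous_map (prod_top X dX) (prod_top X dX) G"
    and GF: "\<And>q. q \<in> X \<times> UNIV \<Longrightarrow> G (F q) = q" and FG: "\<And>q. q \<in> X \<times> UNIV \<Longrightarrow> F (G q) = q"
    using hom unfolding homeomorphic_maps_def topspace_prod_top[OF MX] by auto
  show ?thesis
    unfolding homeomorphic_maps_def topspace_two_point_top[OF MX]
    using continuous_map_two_point_top[OF MX F assms(3)] continuous_map_two_point_top[OF MX G assms(4)]
      GF FG by auto
qed

theorem mainTheorem5:
  fixes U :: "(real^2) set"
    and H :: "(real^2) \<times> real \<Rightarrow> (real^2) \<times> real"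
    and X :: "'a set" and dX :: "'a \<Rightarrow> 'a \<Rightarrow> real" and emb :: "real^2 \<Rightarrow> 'a"
  assumes "bounded U" and "open U" and "contractible U"
    and "\<exists>H'. homeomorphism (closure U \<times> UNIV) (closure U \<times> UNIV) H H'"
    and "H ` (U \<times> UNIV) = U \<times> UNIV"
    and "is_completion U X dX emb"
  shows "\<exists>Hs. homeomorphic_map (prod_top X dX) (prod_top X dX) Hs
           \<and> (\<forall>x\<in>U. \<forall>t. Hs (emb x, t) = (emb (fst (H (x, t))), snd (H (x, t))))
           \<and> Hs ` ((X - emb ` U) \<times> UNIV) = (X - emb ` U) \<times> UNIV
           \<and> (\<exists>G. homeomorphic_map (two_point_top X dX) (two_point_top X dX) G
                 \<and> (\<forall>p\<in>X \<times> UNIV. G (Inl p) = Inl (Hs p)))"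
proof -
  obtain H' where hom: "homeomorphism (closure U \<times> UNIV) (closure U \<times> UNIV) H H'"
    using assms(4) by blast
  have "path_connected U" using assms(3) by (rule contractible_imp_path_connected)
  then have "connected (closure U)" by (intro connected_imp_connected_closure path_connected_imp_connected)
  have "compact (closure U)" using assms(1) by simp
  obtain F G where FG: "homeomorphic_maps (prod_top X dX) (prod_top X dX) F G"
    and F: "\<And>z. z \<in> U \<times> UNIV \<Longrightarrow> F (map_prod emb id z) = map_prod emb id (H z)"
    and G: "\<And>z. z \<in> U \<times> UNIV \<Longrightarrow> G (map_prod emb id z) = map_prod emb id (H' z)"
    using homeomorphic_extension_to_completion[OF \<open>compact (closure U)\<close> closure_subset
        \<open>path_connected U\<close> hom assms(5,6)] by blast
  obtain b where "maps_ends_uniformly (closure U) (\<lambda>x t. snd (H (x, t))) b"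
    "maps_ends_uniformly (closure U) (\<lambda>x t. snd (H' (x, t))) b"
    using maps_ends_uniformly_of_homeomorphism[OF \<open>compact (closure U)\<close> \<open>connected (closure U)\<close> hom] .
  moreover have Fc: "continuous_map (prod_top X dX) (prod_top X dX) F"
    and Gc: "continuous_map (prod_top X dX) (prod_top X dX) G"
    using FG unfolding homeomorphic_maps_def by auto
  ultimately have "homeomorphic_map (two_point_top X dX) (two_point_top X dX) (map_sum F (\<lambda>e. e = b))"
    using homeomorphic_maps_two_point_top[OF is_completionD(1)[OF assms(6)] FG]
      maps_ends_uniformly_extension[OF assms(6) closure_subset Fc F]
      maps_ends_uniformly_extension[OF assms(6) closure_subset Gc G]
    by (meson homeomorphic_maps_imp_map)
  moreover have "F (emb x, t) = (emb (fst (H (x, t))), snd (H (x, t)))" if "x \<in> U" for x t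
    using F[of "(x, t)"] that by (simp add: map_prod_def split_beta)
  ultimately show ?thesis
    using homeomorphic_maps_imp_map[OF FG] homeomorphic_maps_preserve_boundary[OF FG F assms(5,6)]
    by (intro exI[of _ F] conjI exI[of _ "map_sum F (\<lambda>e. e = b)"]) auto
qed

end
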